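(* Let $(L,\le)$ be an infinite linearly ordered set and $\kappa:L\to\{+,-,0\}$ a coloring such that $L$ is not of type $\infty_{+,-,0}$. Then $L$ can be decomposed into finitely many intervals $L=L_1\,\dot\cup\,L_2\,\dot\cup\cdots\dot\cup\,L_m$ with $L_1\prec L_2\prec\cdots\prec L_m$ such that $|\kappa(L_i)|\le 2$ for every $i\le m$.
   Context: $L$ is of type $\infty_{+,-,0}$ if for every natural number $n$ there is a sequence $a_1<a_2<\dots<a_{3(n+1)}$ in $L$ with $\kappa(a_{3i+1})=+$, $\kappa(a_{3i+2})=-$, $\kappa(a_{3i+3})=0$ for all $i\le n$. For intervals $I,J$, $I\prec J$ means $a<b$ for all $a\in I$, $b\in J$. *)

theory Defs
  imports Main
begin

datatype color = Plus | Minus | Zero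

definition type_inf_pmz :: "'a::linorder set \<Rightarrow> ('a \<Rightarrow> color) \<Rightarrow> bool" where
  "type_inf_pmz L \<kappa> \<longleftrightarrow>
     (\<forall>n::nat. \<exists>a::nat \<Rightarrow> 'a.
        (\<forall>j\<in>{1..3*(n+1)}. a j \<in> L) \<and>
        (\<forall>j\<in>{1..<3*(n+1)}. a j < a (Suc j)) \<and>
        (\<forall>i\<le>n. \<kappa> (a (3*i+1)) = Plus \<and> \<kappa> (a (3*i+2)) = Minus \<and> \<kappa> (a (3*i+3)) = Zero))"

definition interval_in :: "'a::linorder set \<Rightarrow> 'a set \<Rightarrow> bool" where
  "interval_in L I \<longleftrightarrow> I \<subseteq> L \<and> (\<forall>x\<in>I. \<forall>z\<in>I. \<forall>y\<in>L. x \<le> y \<and> y \<le> z \<longrightarrow> y \<in> I)"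

definition prec :: "'a::linorder set \<Rightarrow> 'a set \<Rightarrow> bool" (infix "\<prec>" 50) where
  "I \<prec> J \<longleftrightarrow> (\<forall>a\<in>I. \<forall>b\<in>J. a < b)"

end

theory Submission
  imports Defs
begin

text \<open>For x in L let m(x) be the length of the longest prefix of the periodic colour word
  + - 0 + - 0 ... realised by an increasing sequence of points of L below x. Since L is not of
  type infinity_{+,-,0}, m is bounded by some K. The map m is monotone, so its level sets
  {x. m(x) = k}, k < K, are intervals ordered like their levels, and the level set of k misses
  the colour at position k + 1 of the word, since a point of that colour would extend the prefix.\<close>

definition pattern_color :: "nat \<Rightarrow> color" where
  "pattern_color j = (if j mod 3 = 1 then Plus else if j mod 3 = 2 then Minus else Zero)"

definition has_pattern_prefix :: "'a::linorder set \<Rightarrow> ('a \<Rightarrow> color) \<Rightarrow> nat \<Rightarrow> bool" where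
  "has_pattern_prefix S \<kappa> m \<longleftrightarrow> (\<exists>a::nat \<Rightarrow> 'a.
      (\<forall>j\<in>{1..m}. a j \<in> S \<and> \<kappa> (a j) = pattern_color j) \<and> (\<forall>j\<in>{1..<m}. a j < a (Suc j)))"

lemma pattern_color_Suc_neq: "pattern_color (Suc j) \<noteq> pattern_color j"
  unfolding pattern_color_def by (auto simp: mod_Suc split: if_splits)

lemma has_pattern_prefix_0: "has_pattern_prefix S \<kappa> 0"
  unfolding has_pattern_prefix_def by auto

lemma has_pattern_prefix_mono:
  assumes "has_pattern_prefix S \<kappa> m" "k \<le> m" "S \<subseteq> T"
  shows "has_pattern_prefix T \<kappa> k"
proof -
  obtain a where "\<forall>j\<in>{1..m}. a j \<in> S \<and> \<kappa> (a j) = pattern_color j"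
      "\<forall>j\<in>{1..<m}. a j < a (Suc j)"
    using assms(1) unfolding has_pattern_prefix_def by blast
  with assms(2,3) have "(\<forall>j\<in>{1..k}. a j \<in> T \<and> \<kappa> (a j) = pattern_color j)
      \<and> (\<forall>j\<in>{1..<k}. a j < a (Suc j))"
    by auto
  then show ?thesis unfolding has_pattern_prefix_def by blast
qed

lemma has_pattern_prefix_Suc:
  assumes "has_pattern_prefix S \<kappa> m" "x \<in> S" "\<forall>y\<in>S. y \<le> x" "\<kappa> x = pattern_color (Suc m)"
  shows "has_pattern_prefix S \<kappa> (Suc m)"
proof -
  obtain a where a: "\<forall>j\<in>{1..m}. a j \<in> S \<and> \<kappa> (a j) = pattern_color j"
      "\<forall>j\<in>{1..<m}. a j < a (Suc j)"
    using assms(1) unfolding has_pattern_prefix_def by blast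
  have last_lt: "a m < x" if "m \<ge> 1"
  proof -
    have "a m \<le> x" "\<kappa> (a m) = pattern_color m" using a(1) assms(3) that by auto
    with assms(4) pattern_color_Suc_neq[of m] show ?thesis by (auto simp: order.order_iff_strict)
  qed
  have "\<forall>j\<in>{1..Suc m}. (a(Suc m := x)) j \<in> S \<and> \<kappa> ((a(Suc m := x)) j) = pattern_color j"
    using a(1) assms(2,4) by (auto simp: le_Suc_eq)
  moreover have "\<forall>j\<in>{1..<Suc m}. (a(Suc m := x)) j < (a(Suc m := x)) (Suc j)"
    using a(2) last_lt by (auto simp: less_Suc_eq)
  ultimately show ?thesis unfolding has_pattern_prefix_def by blast
qed

lemma type_inf_pmz_iff_has_pattern_prefix:
  "type_inf_pmz L \<kappa> \<longleftrightarrow> (\<forall>n. has_pattern_prefix L \<kappa> (3 * (n + 1)))"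
proof -
  have word: "(\<forall>j\<in>{1..3*(n+1)}. \<kappa> (a j) = pattern_color j) \<longleftrightarrow>
      (\<forall>i\<le>n. \<kappa> (a (3*i+1)) = Plus \<and> \<kappa> (a (3*i+2)) = Minus \<and> \<kappa> (a (3*i+3)) = Zero)"
    for n and a :: "nat \<Rightarrow> 'a"
  proof
    assume colors: "\<forall>j\<in>{1..3*(n+1)}. \<kappa> (a j) = pattern_color j"
    show "\<forall>i\<le>n. \<kappa> (a (3*i+1)) = Plus \<and> \<kappa> (a (3*i+2)) = Minus \<and> \<kappa> (a (3*i+3)) = Zero"
    proof (intro allI impI)
      fix i assume "i \<le> n"
      then have "{3*i+1, 3*i+2, 3*i+3} \<subseteq> {1..3*(n+1)}" by auto
      with colors show "\<kappa> (a (3*i+1)) = Plus \<and> \<kappa> (a (3*i+2)) = Minus \<and> \<kappa> (a (3*i+3)) = Zero"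
        by (auto simp: pattern_color_def mod_Suc)
    qed
  next
    assume colors: "\<forall>i\<le>n. \<kappa> (a (3*i+1)) = Plus \<and> \<kappa> (a (3*i+2)) = Minus \<and> \<kappa> (a (3*i+3)) = Zero"
    show "\<forall>j\<in>{1..3*(n+1)}. \<kappa> (a j) = pattern_color j"
    proof
      fix j assume "j \<in> {1..3*(n+1)}"
      then obtain i r where "j = 3*i + r" "r \<in> {1,2,3}" "i \<le> n"
        by (intro that[of "(j - 1) div 3" "(j - 1) mod 3 + 1"]) auto
      then show "\<kappa> (a j) = pattern_color j" using colors by (auto simp: pattern_color_def)
    qed
  qed
  show ?thesis
    unfolding type_inf_pmz_def has_pattern_prefix_def word[symmetric] by blast
qed

definition pattern_level :: "'a::linorder set \<Rightarrow> ('a \<Rightarrow> color) \<Rightarrow> nat \<Rightarrow> 'a set" where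
  "pattern_level L \<kappa> m = {x \<in> L. has_pattern_prefix {y \<in> L. y \<le> x} \<kappa> m
      \<and> \<not> has_pattern_prefix {y \<in> L. y \<le> x} \<kappa> (Suc m)}"

lemma has_pattern_prefix_below_mono:
  "has_pattern_prefix {y \<in> L. y \<le> x} \<kappa> m \<Longrightarrow> k \<le> m \<Longrightarrow> x \<le> x'
    \<Longrightarrow> has_pattern_prefix {y \<in> L. y \<le> x'} \<kappa> k"
  by (erule has_pattern_prefix_mono) auto

lemma interval_in_pattern_level: "interval_in L (pattern_level L \<kappa> m)"
  unfolding interval_in_def pattern_level_def using has_pattern_prefix_below_mono by blast

lemma pattern_level_prec:
  assumes "k < m"
  shows "pattern_level L \<kappa> k \<prec> pattern_level L \<kappa> m"
  unfolding prec_def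
proof (intro ballI)
  fix x y assume x: "x \<in> pattern_level L \<kappa> k" and y: "y \<in> pattern_level L \<kappa> m"
  show "x < y"
  proof (rule ccontr)
    assume "\<not> x < y"
    have "has_pattern_prefix {z \<in> L. z \<le> y} \<kappa> m"
      using y unfolding pattern_level_def by blast
    then have "has_pattern_prefix {z \<in> L. z \<le> x} \<kappa> (Suc k)"
      by (rule has_pattern_prefix_below_mono) (use assms \<open>\<not> x < y\<close> in auto)
    with x show False unfolding pattern_level_def by blast
  qed
qed

lemma pattern_color_Suc_notin_pattern_level:
  "pattern_color (Suc m) \<notin> \<kappa> ` pattern_level L \<kappa> m"
proof
  assume "pattern_color (Suc m) \<in> \<kappa> ` pattern_level L \<kappa> m"
  then obtain x where x: "x \<in> pattern_level L \<kappa> m" "\<kappa> x = pattern_color (Suc m)"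
    by (metis imageE)
  have "has_pattern_prefix {y \<in> L. y \<le> x} \<kappa> m" "x \<in> L"
    using x(1) by (simp_all add: pattern_level_def)
  then have "has_pattern_prefix {y \<in> L. y \<le> x} \<kappa> (Suc m)"
    using x(2) by (intro has_pattern_prefix_Suc) auto
  with x(1) show False by (simp add: pattern_level_def)
qed

lemma pattern_levels_cover:
  assumes "\<not> has_pattern_prefix L \<kappa> K"
  shows "(\<Union>m<K. pattern_level L \<kappa> m) = L"
proof
  show "(\<Union>m<K. pattern_level L \<kappa> m) \<subseteq> L" by (auto simp: pattern_level_def)
next
  show "L \<subseteq> (\<Union>m<K. pattern_level L \<kappa> m)"
  proof
    fix x assume "x \<in> L"
    let ?P = "has_pattern_prefix {y \<in> L. y \<le> x} \<kappa>"
    have "\<not> ?P K"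
      using assms has_pattern_prefix_mono[of "{y \<in> L. y \<le> x}" \<kappa> K K L] by auto
    have "\<exists>m<K. ?P m \<and> \<not> ?P (Suc m)"
    proof (rule ccontr)
      assume "\<not> (\<exists>m<K. ?P m \<and> \<not> ?P (Suc m))"
      then have "?P m" if "m \<le> K" for m
        using that by (induction m) (auto simp: has_pattern_prefix_0)
      with \<open>\<not> ?P K\<close> show False by blast
    qed
    then obtain m where "m < K" "?P m" "\<not> ?P (Suc m)" by blast
    with \<open>x \<in> L\<close> show "x \<in> (\<Union>m<K. pattern_level L \<kappa> m)"
      unfolding pattern_level_def by blast
  qed
qed

lemma card_image_color_le_2:
  fixes f :: "'a \<Rightarrow> color"
  assumes "c \<notin> f ` A"
  shows "card (f ` A) \<le> 2"
proof -
  have "f ` A \<subseteq> - {c}" using assms by blast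
  moreover have "- {c} = {Plus, Minus, Zero} - {c}"
    using color.exhaust by auto
  moreover have "card ({Plus, Minus, Zero} - {c}) = 2"
    by (cases c) simp_all
  ultimately show ?thesis by (metis card_mono finite.emptyI finite.insertI finite_Diff)
qed

lemma ordered_interval_list_of_chain:
  fixes F :: "nat \<Rightarrow> 'a::linorder set"
  assumes "\<And>m. m < K \<Longrightarrow> interval_in L (F m)"
    and "\<And>k m. k < m \<Longrightarrow> m < K \<Longrightarrow> F k \<prec> F m"
    and "(\<Union>m<K. F m) = L"
    and "\<And>m. m < K \<Longrightarrow> P (F m)"
  shows "\<exists>Ls. (\<forall>i<length Ls. Ls ! i \<noteq> {} \<and> interval_in L (Ls ! i)) \<and>
           (\<Union>i<length Ls. Ls ! i) = L \<and>
           (\<forall>i j. i < j \<and> j < length Ls \<longrightarrow> Ls ! i \<prec> Ls ! j) \<and>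
           (\<forall>i<length Ls. P (Ls ! i))"
proof -
  define Ls where "Ls = filter (\<lambda>I. I \<noteq> {}) (map F [0..<K])"
  have set_Ls: "set Ls = {I \<in> F ` {..<K}. I \<noteq> {}}"
    unfolding Ls_def by auto
  have "sorted_wrt (\<prec>) (map F [0..<K])"
    unfolding sorted_wrt_map using assms(2) by (auto simp: sorted_wrt_iff_nth_less)
  then have "sorted_wrt (\<prec>) Ls"
    unfolding Ls_def by (rule sorted_wrt_filter)
  moreover have "(\<Union>i<length Ls. Ls ! i) = L"
  proof -
    have "(\<Union>i<length Ls. Ls ! i) = \<Union> (set Ls)"
      by (auto simp: in_set_conv_nth) (metis nth_mem)
    also have "\<dots> = L"
      using assms(3) set_Ls by auto
    finally show ?thesis .
  qed
  moreover have "I \<noteq> {} \<and> interval_in L I \<and> P I" if "I \<in> set Ls" for I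
    using that set_Ls assms(1,4) by auto
  ultimately show ?thesis
    by (intro exI[of _ Ls]) (auto simp: sorted_wrt_iff_nth_less)
qed

theorem proposition2p2:
  fixes L :: "'a::linorder set" and \<kappa> :: "'a \<Rightarrow> color"
  assumes "infinite L"
    and "\<not> type_inf_pmz L \<kappa>"
  shows "\<exists>Ls :: 'a set list.
           (\<forall>i<length Ls. Ls ! i \<noteq> {} \<and> interval_in L (Ls ! i)) \<and>
           (\<Union>i<length Ls. Ls ! i) = L \<and>
           (\<forall>i j. i < j \<and> j < length Ls \<longrightarrow> Ls ! i \<prec> Ls ! j) \<and>
           (\<forall>i<length Ls. card (\<kappa> ` (Ls ! i)) \<le> 2)"
proof -
  obtain K where "\<not> has_pattern_prefix L \<kappa> K"
    using assms(2) type_inf_pmz_iff_has_pattern_prefix by blast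
  show ?thesis
  proof (intro ordered_interval_list_of_chain[of K L "pattern_level L \<kappa>"])
    show "interval_in L (pattern_level L \<kappa> m)" for m
      by (rule interval_in_pattern_level)
    show "pattern_level L \<kappa> k \<prec> pattern_level L \<kappa> m" if "k < m" for k m
      using that by (rule pattern_level_prec)
    show "(\<Union>m<K. pattern_level L \<kappa> m) = L"
      using \<open>\<not> has_pattern_prefix L \<kappa> K\<close> by (rule pattern_levels_cover)
    show "card (\<kappa> ` pattern_level L \<kappa> m) \<le> 2" for m
      using pattern_color_Suc_notin_pattern_level by (rule card_image_color_le_2)
  qed
qed

end
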